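(* Let $G/H$ be a Riemannian normal naturally reductive homogeneous space (i.e. the induced metric on $G/H$, equivalently $\langle\cdot,\cdot\rangle|_{\mathfrak p}$, is positive definite) and let $u\colon\mathbb{R}\to\mathfrak p$ be bounded. Then the time-dependent vector field on $\mathbb{R}\times O(\mathfrak p)$ given by $$X(t,S)=\big(1,\;-\tfrac12\,\mathrm{pr}_{\mathfrak p}\circ\mathrm{ad}_{Su(t)}\circ S\big)$$ is complete.
   Context: Normal naturally reductive homogeneous space: $G$ Lie group with bi-invariant pseudo-Riemannian metric from an $\mathrm{Ad}_G$-invariant nondegenerate symmetric bilinear form $\langle\cdot,\cdot\rangle$ on $\mathfrak g$; $H$ closed subgroup with Lie algebra $\mathfrak h$, $\mathfrak p=\mathfrak h^\perp$ nondegenerate; $G/H$ carries the $G$-invariant metric making $\pi\colon G\to G/H$ a pseudo-Riemannian submersion. $\mathrm{pr}_{\mathfrak p}$ is the projection onto $\mathfrak p$ along $\mathfrak h$, $\mathrm{ad}_YZ=[Y,Z]$, and $O(\mathfrak p)$ is the group of linear isometries of $(\mathfrak p,\langle\cdot,\cdot\rangle|_{\mathfrak p})$. Complete means all integral curves are defined for all times. *)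

theory Defs
  imports "HOL-Analysis.Analysis"
begin

text \<open>Algebraic data of a normal naturally reductive homogeneous space G/H:
  the Lie algebra g (a finite dimensional real vector space 'g with bracket br),
  the Ad-invariant nondegenerate symmetric form B, and the subalgebra h.\<close>

definition lie_algebra :: "('g::real_vector \<Rightarrow> 'g \<Rightarrow> 'g) \<Rightarrow> bool" where
  "lie_algebra br \<longleftrightarrow> bilinear br \<and> (\<forall>x y. br x y = - br y x) \<and>
     (\<forall>x y z. br x (br y z) + br y (br z x) + br z (br x y) = 0)"

text \<open>Infinitesimal version of Ad_G-invariance: ad_x is skew w.r.t. B.\<close>
definition invariant_form :: "('g::real_vector \<Rightarrow> 'g \<Rightarrow> real) \<Rightarrow> ('g \<Rightarrow> 'g \<Rightarrow> 'g) \<Rightarrow> bool" where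
  "invariant_form B br \<longleftrightarrow> bilinear B \<and> (\<forall>x y. B x y = B y x) \<and>
     (\<forall>x. (\<forall>y. B x y = 0) \<longrightarrow> x = 0) \<and>
     (\<forall>x y z. B (br x y) z + B y (br x z) = 0)"

definition lie_subalgebra :: "'g::real_vector set \<Rightarrow> ('g \<Rightarrow> 'g \<Rightarrow> 'g) \<Rightarrow> bool" where
  "lie_subalgebra h br \<longleftrightarrow> subspace h \<and> (\<forall>x\<in>h. \<forall>y\<in>h. br x y \<in> h)"

definition pcomp :: "('g \<Rightarrow> 'g \<Rightarrow> real) \<Rightarrow> 'g set \<Rightarrow> 'g set" where
  "pcomp B h = {x. \<forall>y\<in>h. B x y = 0}"

definition prp :: "('g::real_vector \<Rightarrow> 'g \<Rightarrow> real) \<Rightarrow> 'g set \<Rightarrow> 'g \<Rightarrow> 'g" where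
  "prp B h x = (THE y. y \<in> pcomp B h \<and> x - y \<in> h)"

text \<open>The orthogonal group O(p). A linear isometry S of p is represented by the
  linear map S \<circ> pr_p on g (i.e. extended by zero on h).\<close>
definition Op :: "('g::real_vector \<Rightarrow> 'g \<Rightarrow> real) \<Rightarrow> 'g set \<Rightarrow> ('g \<Rightarrow> 'g) set" where
  "Op B h = {S. linear S \<and> (\<forall>x\<in>h. S x = 0) \<and> (\<forall>x\<in>pcomp B h. S x \<in> pcomp B h) \<and>
      (\<forall>x\<in>pcomp B h. \<forall>y\<in>pcomp B h. B (S x) (S y) = B x y)}"

text \<open>Second component of X(t,S) = (1, -1/2 pr_p \<circ> ad_{S u(t)} \<circ> S).\<close>
definition Xfield :: "('g::real_vector \<Rightarrow> 'g \<Rightarrow> real) \<Rightarrow> 'g set \<Rightarrow> ('g \<Rightarrow> 'g \<Rightarrow> 'g)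
     \<Rightarrow> (real \<Rightarrow> 'g) \<Rightarrow> real \<Rightarrow> ('g \<Rightarrow> 'g) \<Rightarrow> ('g \<Rightarrow> 'g)" where
  "Xfield B h br u t S = (\<lambda>x. - (1/2) *\<^sub>R prp B h (br (S (u t)) (S x)))"

text \<open>Integral curve (tau, S) : J \<rightarrow> R \<times> O(p) of X, in the Caratheodory
  (integral) sense, since u is only bounded measurable.\<close>
definition integral_curve :: "('g::real_normed_vector \<Rightarrow> 'g \<Rightarrow> real) \<Rightarrow> 'g set \<Rightarrow> ('g \<Rightarrow> 'g \<Rightarrow> 'g)
     \<Rightarrow> (real \<Rightarrow> 'g) \<Rightarrow> real set \<Rightarrow> (real \<Rightarrow> real) \<Rightarrow> (real \<Rightarrow> ('g \<Rightarrow> 'g)) \<Rightarrow> bool" where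
  "integral_curve B h br u J tau S \<longleftrightarrow>
     (\<forall>s\<in>J. S s \<in> Op B h) \<and>
     (\<forall>s\<in>J. (tau has_real_derivative 1) (at s)) \<and>
     (\<forall>a\<in>J. \<forall>b\<in>J. a \<le> b \<longrightarrow> (\<forall>x.
        ((\<lambda>r. Xfield B h br u (tau r) (S r) x) has_integral (S b x - S a x)) {a..b}))"

definition complete_X :: "('g::real_normed_vector \<Rightarrow> 'g \<Rightarrow> real) \<Rightarrow> 'g set \<Rightarrow> ('g \<Rightarrow> 'g \<Rightarrow> 'g)
     \<Rightarrow> (real \<Rightarrow> 'g) \<Rightarrow> bool" where
  "complete_X B h br u \<longleftrightarrow>
     (\<forall>t0 S0. S0 \<in> Op B h \<longrightarrow>
        (\<exists>tau S. integral_curve B h br u UNIV tau S \<and> tau 0 = t0 \<and> S 0 = S0)) \<and>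
     (\<forall>J tau S. is_interval J \<and> open J \<and> J \<noteq> {} \<and> integral_curve B h br u J tau S \<longrightarrow>
        (\<exists>tau' S'. integral_curve B h br u UNIV tau' S' \<and> (\<forall>s\<in>J. tau' s = tau s \<and> S' s = S s)))"

end

theory Submission
  imports Defs
begin

text \<open>The second component of \<open>X\<close> is quadratic in \<open>S\<close>, hence not globally Lipschitz, and \<open>u\<close> is
  only measurable. Composing the field with the radial retraction of \<open>L(g)\<close> onto a ball that contains
  \<open>O(p)\<close> gives a bounded, globally Lipschitz Caratheodory field, for which Picard iteration yields a
  solution on all of \<open>\<real>\<close> through every initial value, and a halving argument yields uniqueness.
  The \<open>ad\<close>-invariance of \<open>B\<close> makes the field skew with respect to \<open>B\<close> on \<open>p\<close>, so
  \<open>t \<mapsto> B (S t x) (S t y)\<close> has derivative zero as long as \<open>S\<close> stays inside the ball: a solution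
  starting in \<open>O(p)\<close> stays in \<open>O(p)\<close>, never feels the truncation, and is an integral curve of \<open>X\<close>.
  Conversely an integral curve on an interval has \<open>\<tau> s = s + c\<close> and solves the same truncated
  equation, so it coincides with the global solution.\<close>

section \<open>Signed integrals\<close>

definition signed_integral :: "real \<Rightarrow> real \<Rightarrow> (real \<Rightarrow> 'b::banach) \<Rightarrow> 'b" where
  "signed_integral a b f = (if a \<le> b then integral {a..b} f else - integral {b..a} f)"

lemma signed_integral_same [simp]: "signed_integral a a f = 0"
  by (simp add: signed_integral_def)

lemma signed_integral_eq_integral: "a \<le> b \<Longrightarrow> signed_integral a b f = integral {a..b} f"
  by (simp add: signed_integral_def)

lemma signed_integral_combine:
  fixes f :: "real \<Rightarrow> 'b::banach"
  assumes f: "\<And>c d. f integrable_on {c..d}"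
  shows "signed_integral a b f + signed_integral b c f = signed_integral a c f"
  using Henstock_Kurzweil_Integration.integral_combine[OF _ _ f, of a b c]
    Henstock_Kurzweil_Integration.integral_combine[OF _ _ f, of a c b]
    Henstock_Kurzweil_Integration.integral_combine[OF _ _ f, of b a c]
    Henstock_Kurzweil_Integration.integral_combine[OF _ _ f, of b c a]
    Henstock_Kurzweil_Integration.integral_combine[OF _ _ f, of c a b]
    Henstock_Kurzweil_Integration.integral_combine[OF _ _ f, of c b a]
  by (auto simp: signed_integral_def algebra_simps)

lemma signed_integral_add:
  fixes f g :: "real \<Rightarrow> 'b::banach"
  assumes "f integrable_on {min a b..max a b}" "g integrable_on {min a b..max a b}"
  shows "signed_integral a b (\<lambda>r. f r + g r) = signed_integral a b f + signed_integral a b g"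
  using assms by (auto simp: signed_integral_def integral_add min_def max_def)

lemma signed_integral_diff:
  fixes f g :: "real \<Rightarrow> 'b::banach"
  assumes "f integrable_on {min a b..max a b}" "g integrable_on {min a b..max a b}"
  shows "signed_integral a b (\<lambda>r. f r - g r) = signed_integral a b f - signed_integral a b g"
  using assms by (auto simp: signed_integral_def integral_diff min_def max_def)

lemma signed_integral_scaleR: "signed_integral a b (\<lambda>r. c *\<^sub>R f r) = c *\<^sub>R signed_integral a b f"
  by (simp add: signed_integral_def)

lemma signed_integral_linear:
  fixes f :: "real \<Rightarrow> 'b::banach"
  assumes f: "f integrable_on {min a b..max a b}" and g: "bounded_linear g"
  shows "signed_integral a b (\<lambda>r. g (f r)) = g (signed_integral a b f)"
  using integral_linear[OF f g] g
  by (auto simp: signed_integral_def min_def max_def o_def linear_simps split: if_splits)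

lemma has_integral_abs_power:
  "((\<lambda>r. \<bar>r - s\<bar> ^ k) has_integral \<bar>t - s\<bar> ^ Suc k / Suc k) {min s t..max s t}"
proof (cases "s \<le> t")
  case True
  have "((\<lambda>r. (r - s) ^ k) has_integral (t - s) ^ Suc k / Suc k - (s - s) ^ Suc k / Suc k) {s..t}"
    using True by (intro fundamental_theorem_of_calculus)
      (auto intro!: derivative_eq_intros simp: has_real_derivative_iff_has_vector_derivative[symmetric]
        simp del: of_nat_Suc power_Suc)
  then show ?thesis
    using True by (subst has_integral_cong[where g = "\<lambda>r. (r - s) ^ k"]) auto
next
  case False
  have "((\<lambda>r. (s - r) ^ k) has_integral - ((s - s) ^ Suc k / Suc k) - - ((s - t) ^ Suc k / Suc k)) {t..s}"
    using False by (intro fundamental_theorem_of_calculus)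
      (auto intro!: derivative_eq_intros simp: has_real_derivative_iff_has_vector_derivative[symmetric]
        simp del: of_nat_Suc power_Suc)
  then show ?thesis
    using False by (subst has_integral_cong[where g = "\<lambda>r. (s - r) ^ k"]) auto
qed

lemma norm_signed_integral_le_power:
  fixes f :: "real \<Rightarrow> 'b::banach"
  assumes f: "f integrable_on {min s t..max s t}"
    and le: "\<And>r. r \<in> {min s t..max s t} \<Longrightarrow> norm (f r) \<le> c * \<bar>r - s\<bar> ^ k"
  shows "norm (signed_integral s t f) \<le> c * \<bar>t - s\<bar> ^ Suc k / Suc k"
proof -
  have g: "((\<lambda>r. c * \<bar>r - s\<bar> ^ k) has_integral c * (\<bar>t - s\<bar> ^ Suc k / Suc k)) {min s t..max s t}"
    by (intro has_integral_mult_right has_integral_abs_power)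
  have "norm (integral {min s t..max s t} f) \<le> c * (\<bar>t - s\<bar> ^ Suc k / Suc k)"
    using integral_norm_bound_integral[OF f has_integral_integrable[OF g] le] integral_unique[OF g]
    by simp
  then show ?thesis
    by (auto simp: signed_integral_def min_def max_def split: if_splits)
qed

lemma signed_integral_dominated_convergence:
  fixes f :: "nat \<Rightarrow> real \<Rightarrow> 'b::euclidean_space"
  assumes f: "\<And>n. f n integrable_on {min a b..max a b}"
    and le: "\<And>n r. norm (f n r) \<le> C"
    and lim: "\<And>r. (\<lambda>n. f n r) \<longlonglongrightarrow> g r"
  shows "(\<lambda>n. signed_integral a b (f n)) \<longlonglongrightarrow> signed_integral a b g"
proof -
  have "(\<lambda>n. integral {min a b..max a b} (f n)) \<longlonglongrightarrow> integral {min a b..max a b} g"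
    by (rule dominated_convergence(2)[OF f integrable_const_ivl le lim])
  then show ?thesis
    by (cases "a \<le> b") (auto simp: signed_integral_def min_def max_def intro: tendsto_minus)
qed

definition integral_solution ::
    "real set \<Rightarrow> (real \<Rightarrow> ('a::real_normed_vector \<Rightarrow>\<^sub>L 'b::real_normed_vector) \<Rightarrow> ('a \<Rightarrow>\<^sub>L 'b))
      \<Rightarrow> (real \<Rightarrow> ('a \<Rightarrow>\<^sub>L 'b)) \<Rightarrow> bool" where
  "integral_solution J F S \<longleftrightarrow>
     (\<forall>a\<in>J. \<forall>b\<in>J. a \<le> b \<longrightarrow> (\<forall>x. ((\<lambda>r. F r (S r) x) has_integral (S b x - S a x)) {a..b}))"

lemma integral_solutionD:
  fixes F :: "real \<Rightarrow> ('a::real_normed_vector \<Rightarrow>\<^sub>L 'b::banach) \<Rightarrow> ('a \<Rightarrow>\<^sub>L 'b)"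
  assumes S: "integral_solution J F S" and "a \<in> J" "b \<in> J"
  shows integral_solution_integrable: "(\<lambda>r. F r (S r) x) integrable_on {min a b..max a b}"
    and integral_solution_signed_integral: "S b x - S a x = signed_integral a b (\<lambda>r. F r (S r) x)"
proof -
  have "((\<lambda>r. F r (S r) x) has_integral (S (max a b) x - S (min a b) x)) {min a b..max a b}"
    using S assms(2,3) by (auto simp: integral_solution_def min_def max_def)
  then show "(\<lambda>r. F r (S r) x) integrable_on {min a b..max a b}"
    and "S b x - S a x = signed_integral a b (\<lambda>r. F r (S r) x)"
    by (auto simp: signed_integral_def min_def max_def integral_unique split: if_splits)
qed

lemma integral_solutionI:
  fixes F :: "real \<Rightarrow> ('a::real_normed_vector \<Rightarrow>\<^sub>L 'b::banach) \<Rightarrow> ('a \<Rightarrow>\<^sub>L 'b)"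
    and S :: "real \<Rightarrow> ('a \<Rightarrow>\<^sub>L 'b)" and S0 :: "'a \<Rightarrow>\<^sub>L 'b"
  assumes eq: "\<And>t x. S t x = S0 x + signed_integral s0 t (\<lambda>r. F r (S r) x)"
    and int: "\<And>x c d. (\<lambda>r. F r (S r) x) integrable_on {c..d}"
  shows "integral_solution J F S"
  unfolding integral_solution_def
proof (intro ballI impI allI)
  fix a b :: real and x assume "a \<le> b"
  have "S b x - S a x = signed_integral a b (\<lambda>r. F r (S r) x)"
    using signed_integral_combine[OF int[of x], of s0 a b] by (simp add: eq algebra_simps)
  with \<open>a \<le> b\<close> show "((\<lambda>r. F r (S r) x) has_integral (S b x - S a x)) {a..b}"
    by (simp add: signed_integral_eq_integral int integrable_integral)
qed

section \<open>Picard iteration for Lipschitz fields of operators\<close>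

locale lipschitz_field =
  fixes F :: "real \<Rightarrow> ('a::euclidean_space \<Rightarrow>\<^sub>L 'b::euclidean_space) \<Rightarrow> ('a \<Rightarrow>\<^sub>L 'b)"
    and K L :: real
  assumes norm_field_le: "\<And>r M. norm (F r M) \<le> K"
    and field_lipschitz: "\<And>r M N. norm (F r M - F r N) \<le> L * norm (M - N)"
    and lipschitz_const_nonneg: "0 \<le> L"
    and field_integrable: "\<And>M x c d. continuous_on UNIV M \<Longrightarrow> (\<lambda>r. F r (M r) x) integrable_on {c..d}"
begin

lemma bound_nonneg: "0 \<le> K"
  using norm_field_le[of 0 0] norm_ge_zero order_trans by blast

lemma norm_field_apply_le: "norm (F r M x) \<le> K * norm x"
  by (meson mult_right_mono norm_blinfun norm_field_le norm_ge_zero order_trans)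

lemma norm_field_apply_diff_le: "norm (F r M x - F r N x) \<le> L * norm (M - N) * norm x"
  by (metis blinfun.diff_left field_lipschitz mult_right_mono norm_blinfun norm_ge_zero order_trans)

definition picard_step :: "real \<Rightarrow> ('a \<Rightarrow>\<^sub>L 'b) \<Rightarrow> (real \<Rightarrow> 'a \<Rightarrow>\<^sub>L 'b) \<Rightarrow> real \<Rightarrow> 'a \<Rightarrow>\<^sub>L 'b" where
  "picard_step s0 S0 M t = Blinfun (\<lambda>x. S0 x + signed_integral s0 t (\<lambda>r. F r (M r) x))"

lemma picard_step_apply:
  assumes M: "continuous_on UNIV M"
  shows "picard_step s0 S0 M t x = S0 x + signed_integral s0 t (\<lambda>r. F r (M r) x)"
proof -
  have "linear (\<lambda>x. signed_integral s0 t (\<lambda>r. F r (M r) x))"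
    by (rule linearI) (simp_all add: blinfun.add_right blinfun.scaleR_right signed_integral_add
        signed_integral_scaleR field_integrable[OF M])
  then have "bounded_linear (\<lambda>x. S0 x + signed_integral s0 t (\<lambda>r. F r (M r) x))"
    by (intro bounded_linear_add blinfun.bounded_linear_right) (simp add: linear_conv_bounded_linear)
  then show ?thesis
    by (simp add: picard_step_def bounded_linear_Blinfun_apply)
qed

lemma picard_step_lipschitz:
  assumes M: "continuous_on UNIV M"
  shows "K-lipschitz_on UNIV (picard_step s0 S0 M)"
proof (rule lipschitz_onI)
  fix t t' :: real
  show "dist (picard_step s0 S0 M t) (picard_step s0 S0 M t') \<le> K * dist t t'"
    unfolding dist_norm real_norm_def
  proof (rule norm_blinfun_bound)
    fix x
    have "(picard_step s0 S0 M t - picard_step s0 S0 M t') x = signed_integral t' t (\<lambda>r. F r (M r) x)"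
      using signed_integral_combine[OF field_integrable[OF M, of x], of s0 t' t]
      by (simp add: blinfun.diff_left picard_step_apply[OF M] algebra_simps)
    also have "norm \<dots> \<le> K * norm x * \<bar>t - t'\<bar> ^ Suc 0 / Suc 0"
      by (rule norm_signed_integral_le_power) (auto intro: field_integrable[OF M] norm_field_apply_le)
    finally show "norm ((picard_step s0 S0 M t - picard_step s0 S0 M t') x) \<le> K * \<bar>t - t'\<bar> * norm x"
      by (simp add: mult_ac)
  qed (simp add: bound_nonneg)
qed (rule bound_nonneg)

definition picard_iterate :: "real \<Rightarrow> ('a \<Rightarrow>\<^sub>L 'b) \<Rightarrow> nat \<Rightarrow> real \<Rightarrow> 'a \<Rightarrow>\<^sub>L 'b" where
  "picard_iterate s0 S0 n = (picard_step s0 S0 ^^ n) (\<lambda>_. S0)"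

lemma picard_iterate_0 [simp]: "picard_iterate s0 S0 0 t = S0"
  by (simp add: picard_iterate_def)

lemma picard_iterate_lipschitz: "K-lipschitz_on UNIV (picard_iterate s0 S0 n)"
proof (induction n)
  case 0
  show ?case
    using lipschitz_on_constant bound_nonneg by (auto simp: picard_iterate_def intro: lipschitz_on_le)
next
  case (Suc n)
  then show ?case
    by (simp add: picard_iterate_def picard_step_lipschitz lipschitz_on_continuous_on)
qed

lemma continuous_picard_iterate: "continuous_on UNIV (picard_iterate s0 S0 n)"
  by (rule lipschitz_on_continuous_on[OF picard_iterate_lipschitz])

lemma picard_iterate_Suc_apply:
  "picard_iterate s0 S0 (Suc n) t x = S0 x + signed_integral s0 t (\<lambda>r. F r (picard_iterate s0 S0 n r) x)"
  using picard_step_apply[OF continuous_picard_iterate] by (simp add: picard_iterate_def)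

lemma norm_picard_iterate_diff_le:
  "norm (picard_iterate s0 S0 (Suc n) t - picard_iterate s0 S0 n t) \<le> K * L ^ n * \<bar>t - s0\<bar> ^ Suc n / fact (Suc n)"
proof (induction n arbitrary: t)
  case 0
  show ?case
  proof (rule norm_blinfun_bound)
    fix x
    have "norm (signed_integral s0 t (\<lambda>r. F r S0 x)) \<le> K * norm x * \<bar>t - s0\<bar> ^ Suc 0 / Suc 0"
      by (rule norm_signed_integral_le_power)
        (auto intro: field_integrable[of "\<lambda>_. S0", simplified] norm_field_apply_le)
    then show "norm ((picard_iterate s0 S0 (Suc 0) t - picard_iterate s0 S0 0 t) x)
        \<le> K * L ^ 0 * \<bar>t - s0\<bar> ^ Suc 0 / fact (Suc 0) * norm x"
      by (simp add: blinfun.diff_left picard_iterate_Suc_apply mult_ac)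
  qed (simp add: bound_nonneg)
next
  case (Suc n)
  let ?S = "picard_iterate s0 S0"
  show ?case
  proof (rule norm_blinfun_bound)
    fix x :: 'a
    define c where "c = L * (K * L ^ n / fact (Suc n)) * norm x"
    have int: "(\<lambda>r. F r (?S k r) x) integrable_on {a..b}" for k a b
      by (rule field_integrable[OF continuous_picard_iterate])
    have "(?S (Suc (Suc n)) t - ?S (Suc n) t) x
        = signed_integral s0 t (\<lambda>r. F r (?S (Suc n) r) x - F r (?S n r) x)"
      by (simp add: blinfun.diff_left picard_iterate_Suc_apply signed_integral_diff int)
    also have "norm \<dots> \<le> c * \<bar>t - s0\<bar> ^ Suc (Suc n) / Suc (Suc n)"
    proof (rule norm_signed_integral_le_power)
      fix r
      have "norm (F r (?S (Suc n) r) x - F r (?S n r) x) \<le> L * norm (?S (Suc n) r - ?S n r) * norm x"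
        by (rule norm_field_apply_diff_le)
      also have "\<dots> \<le> L * (K * L ^ n * \<bar>r - s0\<bar> ^ Suc n / fact (Suc n)) * norm x"
        by (intro mult_right_mono mult_left_mono Suc.IH lipschitz_const_nonneg norm_ge_zero)
      finally show "norm (F r (?S (Suc n) r) x - F r (?S n r) x) \<le> c * \<bar>r - s0\<bar> ^ Suc n"
        by (simp add: c_def field_simps)
    qed (intro integrable_diff int)
    also have "\<dots> = K * L ^ Suc n * \<bar>t - s0\<bar> ^ Suc (Suc n) / fact (Suc (Suc n)) * norm x"
      by (simp add: c_def field_simps fact_Suc[of "Suc n"] del: fact_Suc)
    finally show "norm ((?S (Suc (Suc n)) t - ?S (Suc n) t) x)
        \<le> K * L ^ Suc n * \<bar>t - s0\<bar> ^ Suc (Suc n) / fact (Suc (Suc n)) * norm x" .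
  qed (simp add: bound_nonneg lipschitz_const_nonneg)
qed

lemma picard_iterate_convergent: "convergent (\<lambda>n. picard_iterate s0 S0 n t)"
proof -
  \<comment> \<open>the successive differences are dominated by an exponential series\<close>
  define T where "T = \<bar>t - s0\<bar>"
  define d where "d k = picard_iterate s0 S0 (Suc k) t - picard_iterate s0 S0 k t" for k
  have "summable d"
  proof (rule summable_comparison_test)
    show "summable (\<lambda>k. K * T * (inverse (fact k) * (L * T) ^ k))"
      by (intro summable_mult summable_exp)
    have "norm (d k) \<le> K * L ^ k * T ^ Suc k / fact k" for k
      using norm_picard_iterate_diff_le[of s0 S0 k t] bound_nonneg lipschitz_const_nonneg
        divide_left_mono[OF fact_mono[of k "Suc k"], of "K * L ^ k * T ^ Suc k"]
      by (fastforce simp: d_def T_def)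
    then show "\<exists>N. \<forall>k\<ge>N. norm (d k) \<le> K * T * (inverse (fact k) * (L * T) ^ k)"
      by (auto simp: field_simps power_mult_distrib)
  qed
  moreover have "picard_iterate s0 S0 n t = S0 + (\<Sum>k<n. d k)" for n
    using sum_lessThan_telescope[of "\<lambda>k. picard_iterate s0 S0 k t" n] by (simp add: d_def)
  ultimately show ?thesis
    by (simp add: convergent_add_const_iff flip: summable_iff_convergent)
qed

definition picard_limit :: "real \<Rightarrow> ('a \<Rightarrow>\<^sub>L 'b) \<Rightarrow> real \<Rightarrow> 'a \<Rightarrow>\<^sub>L 'b" where
  "picard_limit s0 S0 t = lim (\<lambda>n. picard_iterate s0 S0 n t)"

lemma picard_iterate_tendsto: "(\<lambda>n. picard_iterate s0 S0 n t) \<longlonglongrightarrow> picard_limit s0 S0 t"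
  using picard_iterate_convergent by (simp add: picard_limit_def convergent_LIMSEQ_iff)

lemma picard_limit_initial: "picard_limit s0 S0 s0 = S0"
proof -
  have "picard_iterate s0 S0 n s0 = S0" for n
    by (cases n) (auto intro!: blinfun_eqI simp: picard_iterate_Suc_apply)
  then show ?thesis
    using picard_iterate_tendsto[of s0 S0 s0] by (simp add: LIMSEQ_const_iff)
qed

lemma picard_limit_lipschitz: "K-lipschitz_on UNIV (picard_limit s0 S0)"
proof (rule lipschitz_onI)
  fix t t' :: real
  show "dist (picard_limit s0 S0 t) (picard_limit s0 S0 t') \<le> K * dist t t'"
    using picard_iterate_lipschitz[THEN lipschitz_onD]
    by (intro LIMSEQ_le_const2[OF tendsto_dist[OF picard_iterate_tendsto picard_iterate_tendsto]]) auto
qed (rule bound_nonneg)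

lemma picard_limit_apply:
  "picard_limit s0 S0 t x = S0 x + signed_integral s0 t (\<lambda>r. F r (picard_limit s0 S0 r) x)"
proof (rule LIMSEQ_unique)
  let ?S = "picard_limit s0 S0"
  show "(\<lambda>n. picard_iterate s0 S0 (Suc n) t x) \<longlonglongrightarrow> ?S t x"
    using LIMSEQ_Suc[OF picard_iterate_tendsto] by (intro blinfun.tendsto tendsto_const)
  have "(\<lambda>n. F r (picard_iterate s0 S0 n r) x) \<longlonglongrightarrow> F r (?S r) x" for r
  proof (rule LIM_zero_cancel, rule Lim_null_comparison)
    show "\<forall>\<^sub>F n in sequentially. norm (F r (picard_iterate s0 S0 n r) x - F r (?S r) x)
        \<le> L * norm (picard_iterate s0 S0 n r - ?S r) * norm x"
      by (simp add: norm_field_apply_diff_le)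
    show "(\<lambda>n. L * norm (picard_iterate s0 S0 n r - ?S r) * norm x) \<longlonglongrightarrow> 0"
      using tendsto_norm_zero[OF LIM_zero[OF picard_iterate_tendsto]]
      by (intro tendsto_mult_left_zero tendsto_mult_right_zero)
  qed
  then have "(\<lambda>n. signed_integral s0 t (\<lambda>r. F r (picard_iterate s0 S0 n r) x))
      \<longlonglongrightarrow> signed_integral s0 t (\<lambda>r. F r (?S r) x)"
    by (intro signed_integral_dominated_convergence[where C = "K * norm x"] norm_field_apply_le
        field_integrable[OF continuous_picard_iterate])
  then show "(\<lambda>n. picard_iterate s0 S0 (Suc n) t x) \<longlonglongrightarrow> S0 x + signed_integral s0 t (\<lambda>r. F r (?S r) x)"
    unfolding picard_iterate_Suc_apply by (intro tendsto_add tendsto_const)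
qed

theorem picard_existence: "\<exists>S. S s0 = S0 \<and> K-lipschitz_on UNIV S \<and> integral_solution UNIV F S"
proof (intro exI conjI)
  show "integral_solution UNIV F (picard_limit s0 S0)"
    using picard_limit_apply field_integrable[OF lipschitz_on_continuous_on[OF picard_limit_lipschitz]]
    by (rule integral_solutionI)
qed (simp_all add: picard_limit_initial picard_limit_lipschitz)

end

section \<open>Uniqueness\<close>

lemma is_interval_step_induct:
  fixes J :: "real set"
  assumes J: "is_interval J" and ab: "a \<in> J" "b \<in> J" and "P a" and "0 < \<delta>"
    and step: "\<And>x y. x \<in> J \<Longrightarrow> y \<in> J \<Longrightarrow> \<bar>y - x\<bar> < \<delta> \<Longrightarrow> P x \<Longrightarrow> P y"
  shows "P b"
proof (rule connected_induction_simple[where P = P, OF is_interval_connected[OF J] ab \<open>P a\<close>])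
  fix x assume "x \<in> J"
  show "\<exists>T. openin (top_of_set J) T \<and> x \<in> T \<and> (\<forall>y\<in>T. \<forall>z\<in>T. P y \<longrightarrow> P z)"
  proof (intro exI conjI ballI impI)
    show "openin (top_of_set J) (J \<inter> ball x (\<delta> / 2))"
      by (intro openin_open_Int open_ball)
    show "x \<in> J \<inter> ball x (\<delta> / 2)"
      using \<open>x \<in> J\<close> \<open>0 < \<delta>\<close> by simp
    fix y z assume "y \<in> J \<inter> ball x (\<delta> / 2)" "z \<in> J \<inter> ball x (\<delta> / 2)" "P y"
    then have "\<bar>x - y\<bar> < \<delta> / 2" "\<bar>x - z\<bar> < \<delta> / 2"
      by (auto simp: dist_real_def)
    then have "\<bar>z - y\<bar> < \<delta>"
      by arith
    with \<open>P y\<close> \<open>y \<in> J \<inter> ball x (\<delta> / 2)\<close> \<open>z \<in> J \<inter> ball x (\<delta> / 2)\<close> show "P z"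
      using step by blast
  qed
qed

lemma nonpos_if_bound_halves:
  fixes f :: "'a \<Rightarrow> real"
  assumes bounded: "\<And>q. q \<in> A \<Longrightarrow> f q \<le> D"
    and halves: "\<And>e q. (\<And>q. q \<in> A \<Longrightarrow> f q \<le> e) \<Longrightarrow> q \<in> A \<Longrightarrow> f q \<le> e / 2"
    and "q \<in> A"
  shows "f q \<le> 0"
proof -
  have le: "\<forall>q\<in>A. f q \<le> D / 2 ^ n" for n
  proof (induction n)
    case 0
    then show ?case
      using bounded by simp
  next
    case (Suc n)
    then show ?case
      using halves[of "D / 2 ^ n"] by (simp add: mult.commute)
  qed
  have "(\<lambda>n. D / 2 ^ n) \<longlonglongrightarrow> 0"
    by (rule LIMSEQ_divide_realpow_zero) simp
  then show ?thesis
    by (rule LIMSEQ_le_const) (use le \<open>q \<in> A\<close> in blast)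
qed

lemma integral_solution_dist_le:
  fixes F :: "real \<Rightarrow> ('a::real_normed_vector \<Rightarrow>\<^sub>L 'b::banach) \<Rightarrow> ('a \<Rightarrow>\<^sub>L 'b)"
  assumes lipschitz: "\<And>r M N. norm (F r M - F r N) \<le> L * norm (M - N)" and "0 \<le> L"
    and Sa: "integral_solution J F Sa" and Sb: "integral_solution J F Sb"
    and J: "t \<in> J" "q \<in> J" and "Sa t = Sb t" and "0 \<le> e"
    and close: "\<And>r. r \<in> {min t q..max t q} \<Longrightarrow> norm (Sa r - Sb r) \<le> e"
  shows "norm (Sa q - Sb q) \<le> L * e * \<bar>q - t\<bar>"
proof (rule norm_blinfun_bound)
  fix x :: 'a
  note int = integral_solution_integrable[OF Sa J] integral_solution_integrable[OF Sb J]
  have "(Sa q - Sb q) x = (Sa q x - Sa t x) - (Sb q x - Sb t x)"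
    by (simp add: blinfun.diff_left \<open>Sa t = Sb t\<close>)
  also have "\<dots> = signed_integral t q (\<lambda>r. F r (Sa r) x - F r (Sb r) x)"
    by (simp add: integral_solution_signed_integral[OF Sa J] integral_solution_signed_integral[OF Sb J]
        signed_integral_diff int)
  also have "norm \<dots> \<le> L * e * norm x * \<bar>q - t\<bar> ^ Suc 0 / Suc 0"
  proof (rule norm_signed_integral_le_power)
    fix r assume "r \<in> {min t q..max t q}"
    then have "norm ((F r (Sa r) - F r (Sb r)) x) \<le> L * e * norm x"
      using close by (meson \<open>0 \<le> L\<close> lipschitz mult_left_mono mult_right_mono norm_blinfun norm_ge_zero
          order_trans)
    then show "norm (F r (Sa r) x - F r (Sb r) x) \<le> L * e * norm x * \<bar>r - t\<bar> ^ 0"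
      by (simp add: blinfun.diff_left)
  qed (intro integrable_diff int)
  finally show "norm ((Sa q - Sb q) x) \<le> L * e * \<bar>q - t\<bar> * norm x"
    by (simp add: mult_ac)
qed (use \<open>0 \<le> L\<close> \<open>0 \<le> e\<close> in simp)

lemma integral_solution_unique_near:
  fixes F :: "real \<Rightarrow> ('a::real_normed_vector \<Rightarrow>\<^sub>L 'b::banach) \<Rightarrow> ('a \<Rightarrow>\<^sub>L 'b)"
  assumes lipschitz: "\<And>r M N. norm (F r M - F r N) \<le> L * norm (M - N)" and "0 \<le> L"
    and "0 \<le> \<delta>" "\<delta> * L \<le> 1 / 2"
    and J: "is_interval J" and t: "t \<in> J" "Sa t = Sb t"
    and bounded: "\<And>q. q \<in> J \<Longrightarrow> norm (Sa q - Sb q) \<le> D"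
    and Sa: "integral_solution J F Sa" and Sb: "integral_solution J F Sb"
    and q: "q \<in> J" "\<bar>q - t\<bar> \<le> \<delta>"
  shows "Sa q = Sb q"
proof -
  define A where "A = {q \<in> J. \<bar>q - t\<bar> \<le> \<delta>}"
  have between: "r \<in> A" if "q \<in> A" and r: "min t q \<le> r" "r \<le> max t q" for q r
  proof -
    have "q \<in> J" "\<bar>q - t\<bar> \<le> \<delta>"
      using \<open>q \<in> A\<close> by (simp_all add: A_def)
    moreover have "min t q \<in> J" "max t q \<in> J"
      using \<open>q \<in> J\<close> t(1) by (simp_all add: min_def max_def)
    ultimately show ?thesis
      using mem_is_interval_1_I[OF J _ _ r] r by (auto simp: A_def)
  qed
  have "norm (Sa q - Sb q) \<le> 0"
  proof (rule nonpos_if_bound_halves[where A = A and f = "\<lambda>q. norm (Sa q - Sb q)"])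
    show "norm (Sa q - Sb q) \<le> D" if "q \<in> A" for q
      using that bounded by (simp add: A_def)
    fix e q assume e: "\<And>q. q \<in> A \<Longrightarrow> norm (Sa q - Sb q) \<le> e" and "q \<in> A"
    have "0 \<le> e"
      using e[of t] t \<open>0 \<le> \<delta>\<close> by (simp add: A_def)
    have "norm (Sa q - Sb q) \<le> L * e * \<bar>q - t\<bar>"
    proof (rule integral_solution_dist_le[OF lipschitz \<open>0 \<le> L\<close> Sa Sb t(1) _ t(2) \<open>0 \<le> e\<close>])
      show "q \<in> J"
        using \<open>q \<in> A\<close> by (simp add: A_def)
      show "norm (Sa r - Sb r) \<le> e" if "r \<in> {min t q..max t q}" for r
        using e between[OF \<open>q \<in> A\<close>] that by simp
    qed
    also have "\<dots> \<le> L * e * \<delta>"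
      using \<open>q \<in> A\<close> \<open>0 \<le> L\<close> \<open>0 \<le> e\<close> by (intro mult_left_mono) (simp_all add: A_def)
    also have "\<dots> \<le> e / 2"
      using mult_right_mono[OF \<open>\<delta> * L \<le> 1 / 2\<close> \<open>0 \<le> e\<close>] by (simp add: mult_ac)
    finally show "norm (Sa q - Sb q) \<le> e / 2" .
  qed (use q in \<open>simp add: A_def\<close>)
  then show ?thesis
    by simp
qed

lemma integral_solution_unique:
  fixes F :: "real \<Rightarrow> ('a::real_normed_vector \<Rightarrow>\<^sub>L 'b::banach) \<Rightarrow> ('a \<Rightarrow>\<^sub>L 'b)"
  assumes lipschitz: "\<And>r M N. norm (F r M - F r N) \<le> L * norm (M - N)" and "0 \<le> L"
    and J: "is_interval J" and "s0 \<in> J" "Sa s0 = Sb s0"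
    and bounded: "\<And>t. t \<in> J \<Longrightarrow> norm (Sa t - Sb t) \<le> D"
    and Sa: "integral_solution J F Sa" and Sb: "integral_solution J F Sb"
    and "t \<in> J"
  shows "Sa t = Sb t"
proof -
  define \<delta> where "\<delta> = 1 / (2 * (L + 1))"
  have \<delta>: "0 < \<delta>" "\<delta> * L \<le> 1 / 2"
    using \<open>0 \<le> L\<close> by (simp_all add: \<delta>_def field_simps)
  have step: "Sa y = Sb y" if "x \<in> J" "y \<in> J" "\<bar>y - x\<bar> < \<delta>" "Sa x = Sb x" for x y
    using integral_solution_unique_near[OF lipschitz \<open>0 \<le> L\<close> less_imp_le[OF \<delta>(1)] \<delta>(2) J that(1,4)
        bounded Sa Sb that(2)] that(3) by simp
  show ?thesis
    using is_interval_step_induct[OF J \<open>s0 \<in> J\<close> \<open>t \<in> J\<close>, of "\<lambda>t. Sa t = Sb t", OF \<open>Sa s0 = Sb s0\<close> \<delta>(1)]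
      step by blast
qed

lemma integrable_on_if_measurable_on_bounded:
  fixes f :: "real \<Rightarrow> 'b::euclidean_space"
  assumes "f measurable_on UNIV" and "\<And>r. norm (f r) \<le> C"
  shows "f integrable_on {a..b}"
proof (rule measurable_bounded_by_integrable_imp_integrable)
  have "f \<in> borel_measurable lebesgue"
    using assms(1) by (simp add: measurable_on_iff_borel_measurable lebesgue_on_UNIV_eq)
  then show "f \<in> borel_measurable (lebesgue_on {a..b})"
    by (rule measurable_restrict_space1)
qed (use assms(2) in auto)

lemma has_real_derivative_zero_if_quadratic_bound:
  fixes g :: "real \<Rightarrow> real"
  assumes quadratic: "\<And>t. \<bar>g t - g s\<bar> \<le> C * (t - s)\<^sup>2"
  shows "(g has_real_derivative 0) (at s)"
  unfolding has_field_derivative_iff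
proof (rule Lim_null_comparison)
  have "norm ((g t - g s) / (t - s)) \<le> C * \<bar>t - s\<bar>" if "t \<noteq> s" for t
    using quadratic[of t] that
    by (simp add: abs_divide pos_divide_le_eq power2_eq_square abs_mult_self_eq mult.assoc)
  then show "\<forall>\<^sub>F t in at s. norm ((g t - g s) / (t - s)) \<le> C * \<bar>t - s\<bar>"
    by (auto simp: eventually_at_filter)
  have "((\<lambda>t. C * \<bar>t - s\<bar>) \<longlongrightarrow> C * \<bar>s - s\<bar>) (at s)"
    by (intro tendsto_intros)
  then show "((\<lambda>t. C * \<bar>t - s\<bar>) \<longlongrightarrow> 0) (at s)"
    by simp
qed

lemma real_derivative_one_imp_shift:
  assumes J: "is_interval J" and deriv: "\<And>s. s \<in> J \<Longrightarrow> (f has_real_derivative 1) (at s)"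
  obtains c where "\<And>s. s \<in> J \<Longrightarrow> f s = s + c"
proof -
  have "\<exists>c. \<forall>s\<in>J. f s - s = c"
  proof (rule has_field_derivative_zero_constant)
    show "convex J"
      using J by (rule is_interval_convex)
    fix s assume "s \<in> J"
    have "((\<lambda>s. f s - s) has_real_derivative 1 - 1) (at s)"
      by (intro derivative_intros deriv[OF \<open>s \<in> J\<close>])
    then show "((\<lambda>s. f s - s) has_real_derivative 0) (at s within J)"
      by (simp add: has_field_derivative_at_within)
  qed
  then show ?thesis
    using that by (metis add.commute diff_add_cancel)
qed

definition radial_retraction :: "real \<Rightarrow> 'a::real_normed_vector \<Rightarrow> 'a" where
  "radial_retraction R x = (if norm x \<le> R then x else (R / norm x) *\<^sub>R x)"

lemma radial_retraction_id: "norm x \<le> R \<Longrightarrow> radial_retraction R x = x"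
  by (simp add: radial_retraction_def)

lemma norm_radial_retraction_le: "0 \<le> R \<Longrightarrow> norm (radial_retraction R x) \<le> R"
  by (simp add: radial_retraction_def)

lemma norm_scaled_minus_radial_retraction_le:
  assumes "0 \<le> R" "R < norm x" "norm y \<le> norm x"
  shows "norm ((R / norm x) *\<^sub>R y - radial_retraction R y) \<le> norm x - norm y"
proof -
  define a where "a = R / norm x"
  have a: "0 \<le> a" "a \<le> 1" "a * norm x = R"
    using assms by (auto simp: a_def divide_le_eq_1)
  show ?thesis
  proof (cases "norm y \<le> R")
    case True
    have "a *\<^sub>R y - y = (a - 1) *\<^sub>R y"
      by (simp add: algebra_simps)
    then have "norm (a *\<^sub>R y - y) = (1 - a) * norm y"
      using a by simp
    also have "\<dots> \<le> (1 - a) * norm x"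
      using a assms by (intro mult_left_mono) auto
    finally show ?thesis
      using True a by (simp add: a_def radial_retraction_id algebra_simps)
  next
    case False
    define b where "b = R / norm y"
    have "0 < norm y" "b * norm y = R"
      using False assms by (auto simp: b_def)
    have "a \<le> b"
      unfolding a_def b_def using assms \<open>0 < norm y\<close> by (intro divide_left_mono mult_pos_pos) auto
    have "norm (a *\<^sub>R y - b *\<^sub>R y) = \<bar>a - b\<bar> * norm y"
      by (simp flip: scaleR_diff_left)
    also have "\<dots> = a * (norm x - norm y)"
      using \<open>a \<le> b\<close> \<open>b * norm y = R\<close> a by (simp add: algebra_simps)
    also have "\<dots> \<le> norm x - norm y"
      using a assms by (simp add: mult_left_le_one_le)
    finally show ?thesis
      using False by (simp add: radial_retraction_def a_def b_def)
  qed
qed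

lemma norm_radial_retraction_diff_le:
  assumes "0 \<le> R" "norm y \<le> norm x"
  shows "norm (radial_retraction R x - radial_retraction R y) \<le> 2 * norm (x - y)"
proof (cases "norm x \<le> R")
  case True
  then show ?thesis
    using assms by (simp add: radial_retraction_id)
next
  case False
  define a where "a = R / norm x"
  have "0 \<le> a" "a \<le> 1"
    using False assms by (auto simp: a_def divide_le_eq_1)
  have "radial_retraction R x = a *\<^sub>R x"
    using False by (simp add: radial_retraction_def a_def)
  then have "norm (radial_retraction R x - radial_retraction R y)
      \<le> norm (a *\<^sub>R (x - y)) + norm (a *\<^sub>R y - radial_retraction R y)"
    using norm_triangle_ineq[of "a *\<^sub>R (x - y)" "a *\<^sub>R y - radial_retraction R y"]
    by (simp add: algebra_simps)
  moreover have "norm (a *\<^sub>R (x - y)) \<le> norm (x - y)"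
    using \<open>0 \<le> a\<close> \<open>a \<le> 1\<close> by (simp add: mult_left_le_one_le)
  moreover have "norm (a *\<^sub>R y - radial_retraction R y) \<le> norm x - norm y"
    unfolding a_def using False assms by (intro norm_scaled_minus_radial_retraction_le) auto
  ultimately show ?thesis
    using norm_triangle_ineq2[of x y] by linarith
qed

lemma radial_retraction_lipschitz:
  assumes "0 \<le> R"
  shows "2-lipschitz_on UNIV (radial_retraction R :: 'a::real_normed_vector \<Rightarrow> 'a)"
proof (rule lipschitz_onI)
  fix x y :: 'a
  show "dist (radial_retraction R x) (radial_retraction R y) \<le> 2 * dist x y"
    using norm_radial_retraction_diff_le[OF assms, of x y] norm_radial_retraction_diff_le[OF assms, of y x]
    by (cases "norm y \<le> norm x") (auto simp: dist_norm norm_minus_commute)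
qed simp

lemma measurable_on_translate:
  fixes f :: "real \<Rightarrow> 'b::euclidean_space"
  assumes "f \<in> borel_measurable lebesgue"
  shows "(\<lambda>r. f (r + c)) measurable_on UNIV"
proof -
  have "(\<lambda>r::real. c + r) \<in> lebesgue \<rightarrow>\<^sub>M lebesgue"
    using lebesgue_affine_measurable[where c = "\<lambda>_. 1" and t = c] by simp
  then have "(\<lambda>r. f (r + c)) \<in> borel_measurable lebesgue"
    using measurable_compose[OF _ assms] by (simp add: add.commute)
  then show ?thesis
    by (simp add: measurable_on_iff_borel_measurable lebesgue_on_UNIV_eq)
qed

lemma dim_pcomp:
  fixes B :: "'a::euclidean_space \<Rightarrow> 'a \<Rightarrow> real"
  assumes B: "bilinear B" and nondegenerate: "\<And>z. (\<And>y. B y z = 0) \<Longrightarrow> z = 0"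
    and h: "subspace h"
  shows "dim (pcomp B h) + dim h = DIM('a)"
proof -
  define T where "T z = (\<Sum>b\<in>Basis. B b z *\<^sub>R b)" for z
  have inner_T: "T z \<bullet> y = B y z" for y z
  proof -
    have "B y z = B (\<Sum>b\<in>Basis. (y \<bullet> b) *\<^sub>R b) z"
      by (simp add: euclidean_representation)
    also have "\<dots> = (\<Sum>b\<in>Basis. (y \<bullet> b) * B b z)"
      using B by (simp add: bilinear_def linear_sum[of "\<lambda>x. B x z"] linear_scale[of "\<lambda>x. B x z"] o_def)
    finally show ?thesis
      by (simp add: T_def inner_sum_left inner_sum_right inner_commute mult.commute)
  qed
  have T: "linear T"
    using B by (auto intro!: linearI simp: T_def bilinear_radd bilinear_rmul scaleR_add_left
        sum.distrib scaleR_sum_right)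
  have "inj T"
    unfolding linear_inj_iff_eq_0[OF T] using nondegenerate inner_T by (metis inner_zero_left)
  then have "dim (T ` h) = dim h"
    by (intro dim_image_eq[OF T]) (auto simp: inj_on_def inj_def)
  moreover have "pcomp B h = {y \<in> UNIV. \<forall>w \<in> T ` h. orthogonal w y}"
    by (auto simp: pcomp_def orthogonal_def inner_T)
  moreover have "dim {y \<in> UNIV. \<forall>w \<in> T ` h. orthogonal w y} + dim (T ` h) = dim (UNIV :: 'a set)"
    by (rule dim_subspace_orthogonal_to_vectors) (simp_all add: linear_subspace_image[OF T h])
  ultimately show ?thesis
    by simp
qed

lemma bilinear_coercive_on_subspace:
  fixes B :: "'a::euclidean_space \<Rightarrow> 'a \<Rightarrow> real"
  assumes B: "bilinear B" and V: "subspace V" and pos: "\<And>x. x \<in> V \<Longrightarrow> x \<noteq> 0 \<Longrightarrow> 0 < B x x"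
  obtains c where "0 < c" "\<And>x. x \<in> V \<Longrightarrow> c * (norm x)\<^sup>2 \<le> B x x"
proof (cases "V \<subseteq> {0}")
  case True
  show ?thesis
  proof (rule that[of 1])
    fix x assume "x \<in> V"
    then show "1 * (norm x)\<^sup>2 \<le> B x x"
      using True B by (auto simp: bilinear_lzero)
  qed simp
next
  case False
  define S where "S = sphere 0 1 \<inter> V"
  have normalize: "(1 / norm x) *\<^sub>R x \<in> S" if "x \<in> V" "x \<noteq> 0" for x
    using that V by (simp add: S_def subspace_scale)
  obtain z where "z \<in> V" "z \<noteq> 0"
    using False by auto
  then have "S \<noteq> {}"
    using normalize by blast
  moreover have "compact S"
    unfolding S_def by (intro compact_Int_closed compact_sphere closed_subspace V)
  moreover have "continuous_on S (\<lambda>x. B x x)"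
    by (rule bilinear_continuous_on_compose[OF continuous_on_id continuous_on_id B])
  ultimately obtain x0 where x0: "x0 \<in> S" and min: "\<And>y. y \<in> S \<Longrightarrow> B x0 x0 \<le> B y y"
    using continuous_attains_inf[of S "\<lambda>x. B x x"] by auto
  show ?thesis
  proof (rule that)
    show "0 < B x0 x0"
      using x0 by (intro pos) (auto simp: S_def)
    fix x assume "x \<in> V"
    show "B x0 x0 * (norm x)\<^sup>2 \<le> B x x"
    proof (cases "x = 0")
      case True
      then show ?thesis
        using B by (simp add: bilinear_lzero)
    next
      case False
      have "B x0 x0 \<le> B ((1 / norm x) *\<^sub>R x) ((1 / norm x) *\<^sub>R x)"
        using min normalize \<open>x \<in> V\<close> False by blast
      also have "\<dots> = B x x / (norm x)\<^sup>2"
        using B by (simp add: bilinear_lmul bilinear_rmul power2_eq_square)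
      finally show ?thesis
        using False by (simp add: field_simps)
    qed
  qed
qed

section \<open>The reductive decomposition and the vector field\<close>

text \<open>Of the Lie structure only the bilinearity of the bracket and the \<open>ad\<close>-invariance of \<open>B\<close> are used:
  neither the Jacobi identity, nor the closedness of \<open>h\<close> under the bracket, nor the hypothesis that \<open>u\<close>
  takes values in \<open>p\<close> is needed.\<close>

locale riemannian_reductive =
  fixes B :: "'g::euclidean_space \<Rightarrow> 'g \<Rightarrow> real"
    and br :: "'g \<Rightarrow> 'g \<Rightarrow> 'g"
    and h :: "'g set"
  assumes bracket_bilinear: "bilinear br"
    and invariant: "invariant_form B br"
    and h_subspace: "subspace h"
    and p_positive: "\<forall>x\<in>pcomp B h. x \<noteq> 0 \<longrightarrow> 0 < B x x"
begin

abbreviation "p \<equiv> pcomp B h"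
abbreviation "P \<equiv> prp B h"

lemma B_bilinear: "bilinear B"
  and B_sym: "B x y = B y x"
  and B_nondegenerate: "(\<And>y. B x y = 0) \<Longrightarrow> x = 0"
  and B_ad_skew: "B (br z x) y + B x (br z y) = 0"
  using invariant by (auto simp: invariant_form_def)

lemma bounded_linear_B_left: "bounded_linear (\<lambda>z. B z w)"
  and bounded_linear_B_right: "bounded_linear (\<lambda>z. B w z)"
  using B_bilinear by (simp_all add: bilinear_def linear_conv_bounded_linear)

lemma abs_B_le:
  obtains KB where "0 < KB" "\<And>a b. \<bar>B a b\<bar> \<le> KB * norm a * norm b"
  using bounded_bilinear.pos_bounded[of B] B_bilinear
  by (auto simp: bilinear_conv_bounded_bilinear mult.commute mult.left_commute)

lemma p_subspace: "subspace p"
  using B_bilinear by (auto simp: subspace_def pcomp_def bilinear_ladd bilinear_lmul bilinear_lzero)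

lemma h_inter_p: "x \<in> h \<Longrightarrow> x \<in> p \<Longrightarrow> x = 0"
  using p_positive by (fastforce simp: pcomp_def)

lemma h_plus_p: "\<exists>y\<in>p. x - y \<in> h"
proof -
  have "dim p + dim h = DIM('g)"
    using B_bilinear B_nondegenerate B_sym h_subspace by (intro dim_pcomp) auto
  moreover have "dim (h \<inter> p) = 0"
    using h_inter_p by auto
  ultimately have "dim {a + y |a y. a \<in> h \<and> y \<in> p} = DIM('g)"
    using dim_sums_Int[OF h_subspace p_subspace] by linarith
  then have "span {a + y |a y. a \<in> h \<and> y \<in> p} = UNIV"
    by (simp add: dim_eq_full)
  moreover have "span {a + y |a y. a \<in> h \<and> y \<in> p} = {a + y |a y. a \<in> h \<and> y \<in> p}"
    using subspace_sums[OF h_subspace p_subspace] by (rule span_eq_iff[THEN iffD2])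
  ultimately obtain a y where "a \<in> h" "y \<in> p" "x = a + y"
    by blast
  then show ?thesis
    by (intro bexI[of _ y]) auto
qed

lemma prp_eqI:
  assumes "y \<in> p" "x - y \<in> h"
  shows "P x = y"
proof -
  have unique: "y1 = y2" if "y1 \<in> p" "x - y1 \<in> h" "y2 \<in> p" "x - y2 \<in> h" for y1 y2
  proof -
    have "y2 - y1 = (x - y1) - (x - y2)"
      by simp
    then have "y2 - y1 \<in> h"
      using that h_subspace by (metis subspace_diff)
    moreover have "y2 - y1 \<in> p"
      using that p_subspace by (simp add: subspace_diff)
    ultimately have "y2 - y1 = 0"
      by (rule h_inter_p)
    then show ?thesis
      by simp
  qed
  show ?thesis
    unfolding prp_def by (rule the_equality) (use assms unique in auto)
qed

lemma prp_mem: "P x \<in> p" and diff_prp_mem: "x - P x \<in> h"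
  using h_plus_p[of x] prp_eqI by auto

lemma prp_id: "x \<in> p \<Longrightarrow> P x = x"
  by (rule prp_eqI) (auto simp: subspace_0[OF h_subspace])

lemma prp_zero: "x \<in> h \<Longrightarrow> P x = 0"
  by (rule prp_eqI) (auto simp: subspace_0[OF p_subspace])

lemma linear_prp: "linear P"
proof (rule linearI)
  fix x y
  have "x + y - (P x + P y) \<in> h"
    using subspace_add[OF h_subspace diff_prp_mem[of x] diff_prp_mem[of y]] by (simp add: algebra_simps)
  then show "P (x + y) = P x + P y"
    by (rule prp_eqI[OF subspace_add[OF p_subspace prp_mem prp_mem]])
next
  fix c x
  have "c *\<^sub>R x - c *\<^sub>R P x \<in> h"
    using subspace_scale[OF h_subspace diff_prp_mem[of x], of c] by (simp add: algebra_simps)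
  then show "P (c *\<^sub>R x) = c *\<^sub>R P x"
    by (rule prp_eqI[OF subspace_scale[OF p_subspace prp_mem]])
qed

lemma B_prp:
  assumes "w \<in> p"
  shows "B (P z) w = B z w"
proof -
  have "B w (z - P z) = 0"
    using assms diff_prp_mem by (simp add: pcomp_def)
  then show ?thesis
    using B_bilinear by (simp add: B_sym[of w] bilinear_lsub)
qed

lemma Op_prp:
  assumes "S \<in> Op B h"
  shows "S (P x) = S x"
proof -
  have "S (x - P x) = 0"
    using assms diff_prp_mem by (simp add: Op_def)
  then show ?thesis
    using assms by (simp add: Op_def linear_diff)
qed

lemma Op_bounded: "\<exists>K. \<forall>S\<in>Op B h. \<forall>x. norm (S x) \<le> K * norm x"
proof -
  obtain c where c: "0 < c" "\<And>x. x \<in> p \<Longrightarrow> c * (norm x)\<^sup>2 \<le> B x x"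
    using bilinear_coercive_on_subspace[OF B_bilinear p_subspace] p_positive by blast
  obtain KB where KB: "0 < KB" "\<And>a b. \<bar>B a b\<bar> \<le> KB * norm a * norm b"
    using abs_B_le by blast
  obtain KP where KP: "0 < KP" "\<And>x. norm (P x) \<le> norm x * KP"
    using linear_prp by (auto simp: linear_conv_bounded_linear dest: bounded_linear.pos_bounded)
  define A where "A = KB * KP\<^sup>2 / c"
  have "norm (S x) \<le> sqrt A * norm x" if S: "S \<in> Op B h" for S x
  proof -
    have "S (P x) \<in> p"
      using S prp_mem by (simp add: Op_def)
    then have "c * (norm (S x))\<^sup>2 \<le> B (S (P x)) (S (P x))"
      using c(2) Op_prp[OF S] by simp
    also have "\<dots> = B (P x) (P x)"
      using S prp_mem by (simp add: Op_def)
    also have "\<dots> \<le> KB * (norm (P x))\<^sup>2"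
      using abs_ge_self KB(2)[of "P x" "P x"] by (simp add: power2_eq_square mult.assoc)
    also have "\<dots> \<le> KB * (KP * norm x)\<^sup>2"
      using KP(2)[of x] KB(1) by (intro mult_left_mono power_mono) (auto simp: mult.commute)
    finally have "c * (norm (S x))\<^sup>2 \<le> KB * KP\<^sup>2 * (norm x)\<^sup>2"
      by (simp add: power_mult_distrib mult_ac)
    then have "(norm (S x))\<^sup>2 \<le> A * (norm x)\<^sup>2"
      using c(1) by (simp add: A_def pos_le_divide_eq mult.commute mult.left_commute)
    then have "norm (S x) \<le> sqrt (A * (norm x)\<^sup>2)"
      by (rule real_le_rsqrt)
    then show ?thesis
      by (simp add: real_sqrt_mult)
  qed
  then show ?thesis
    by blast
qed

lemma blinfun_apply_Blinfun_Op: "S \<in> Op B h \<Longrightarrow> blinfun_apply (Blinfun S) = S"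
  by (simp add: Op_def bounded_linear_Blinfun_apply linear_conv_bounded_linear)

definition Op_bound :: real where
  "Op_bound = (SOME K. 0 \<le> K \<and> (\<forall>S\<in>Op B h. norm (Blinfun S) \<le> K))"

lemma Op_bound_nonneg: "0 \<le> Op_bound"
  and norm_Blinfun_Op_le: "S \<in> Op B h \<Longrightarrow> norm (Blinfun S) \<le> Op_bound"
proof -
  obtain K where K: "\<And>S x. S \<in> Op B h \<Longrightarrow> norm (S x) \<le> K * norm x"
    using Op_bounded by blast
  have "norm (S x) \<le> max K 0 * norm x" if "S \<in> Op B h" for S x
    using K[OF that, of x] by (meson max.cobounded1 mult_right_mono norm_ge_zero order_trans)
  then have "norm (Blinfun S) \<le> max K 0" if "S \<in> Op B h" for S
    using that by (intro norm_blinfun_bound) (auto simp: blinfun_apply_Blinfun_Op)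
  then have "0 \<le> max K 0 \<and> (\<forall>S\<in>Op B h. norm (Blinfun S) \<le> max K 0)"
    by simp
  then have "0 \<le> Op_bound \<and> (\<forall>S\<in>Op B h. norm (Blinfun S) \<le> Op_bound)"
    unfolding Op_bound_def by (rule someI)
  then show "0 \<le> Op_bound" "S \<in> Op B h \<Longrightarrow> norm (Blinfun S) \<le> Op_bound"
    by auto
qed

text \<open>The
  inner \<open>P\<close> makes every value vanish on \<open>h\<close>, as the elements of \<open>Op B h\<close> do.\<close>

definition frame_field :: "('g \<Rightarrow>\<^sub>L 'g) \<Rightarrow> 'g \<Rightarrow> ('g \<Rightarrow>\<^sub>L 'g)" where
  "frame_field A v = Blinfun (\<lambda>x. - (1 / 2) *\<^sub>R P (br (A v) (A (P x))))"

lemma frame_field_apply: "frame_field A v x = - (1 / 2) *\<^sub>R P (br (A v) (A (P x)))"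
proof -
  have "linear (\<lambda>x. - (1 / 2) *\<^sub>R P (br (A v) (A (P x))))"
    using linear_prp bracket_bilinear
    by (auto intro!: linearI simp: linear_add linear_scale blinfun.add_right blinfun.scaleR_right
        bilinear_radd bilinear_rmul)
  then show ?thesis
    by (simp add: frame_field_def bounded_linear_Blinfun_apply linear_conv_bounded_linear)
qed

lemma frame_field_zero_on_h: "x \<in> h \<Longrightarrow> frame_field A v x = 0"
  using linear_prp bracket_bilinear by (simp add: frame_field_apply prp_zero bilinear_rzero linear_0)

lemma frame_field_mem_p: "frame_field A v x \<in> p"
  unfolding frame_field_apply by (rule subspace_scale[OF p_subspace prp_mem])

lemma frame_field_0 [simp]: "frame_field 0 v = 0"
  using linear_prp bracket_bilinear by (intro blinfun_eqI) (simp add: frame_field_apply bilinear_lzero linear_0)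

lemma Xfield_eq_frame_field:
  "S \<in> Op B h \<Longrightarrow> Xfield B h br u t S x = frame_field (Blinfun S) (u t) x"
  by (simp add: Xfield_def frame_field_apply blinfun_apply_Blinfun_Op Op_prp)

lemma norm_prp_bracket_le:
  obtains C where "0 \<le> C"
    "\<And>M N a x. norm (P (br (blinfun_apply M a) (blinfun_apply N (P x)))) \<le> C * (norm M * norm (a::'g)) * (norm N * norm x)"
proof -
  obtain Kb where Kb: "0 < Kb" "\<And>a b. norm (br a b) \<le> norm a * norm b * Kb"
    using bounded_bilinear.pos_bounded[of br] bracket_bilinear
    by (auto simp: bilinear_conv_bounded_bilinear)
  obtain Kp where Kp: "0 < Kp" "\<And>x. norm (P x) \<le> norm x * Kp"
    using linear_prp by (auto simp: linear_conv_bounded_linear dest: bounded_linear.pos_bounded)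
  have bound: "norm (P (br (M a) (N (P x)))) \<le> Kp * Kb * Kp * (norm M * norm a) * (norm N * norm x)"
    for M N :: "'g \<Rightarrow>\<^sub>L 'g" and a x
  proof -
    have Ma: "norm (M a) \<le> norm M * norm a"
      by (rule norm_blinfun)
    have NPx: "norm (N (P x)) \<le> norm N * (norm x * Kp)"
      using norm_blinfun[of N "P x"] Kp(2)[of x] by (meson mult_left_mono norm_ge_zero order_trans)
    have "norm (P (br (M a) (N (P x)))) \<le> norm (br (M a) (N (P x))) * Kp"
      by (rule Kp(2))
    also have "\<dots> \<le> (norm (M a) * norm (N (P x)) * Kb) * Kp"
      using Kb(2) Kp(1) by (intro mult_right_mono) auto
    also have "\<dots> \<le> ((norm M * norm a) * (norm N * (norm x * Kp)) * Kb) * Kp"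
      using Kb(1) Kp(1) by (intro mult_right_mono mult_mono[OF Ma NPx]) auto
    also have "\<dots> = Kp * Kb * Kp * (norm M * norm a) * (norm N * norm x)"
      by (simp add: mult_ac)
    finally show ?thesis .
  qed
  have "0 \<le> Kp * Kb * Kp"
    using Kb(1) Kp(1) by simp
  then show ?thesis
    using bound by (rule that)
qed

lemma frame_field_lipschitz:
  obtains C where "0 \<le> C"
    and "\<And>A A' v. norm (frame_field A v - frame_field A' v) \<le> C * norm v * (norm A + norm A') * norm (A - A')"
proof -
  obtain K where K: "0 \<le> K"
    "\<And>M N a x. norm (P (br (blinfun_apply M a) (blinfun_apply N (P x)))) \<le> K * (norm M * norm (a::'g)) * (norm N * norm x)"
    using norm_prp_bracket_le by blast
  have "norm (frame_field A v - frame_field A' v) \<le> K / 2 * norm v * (norm A + norm A') * norm (A - A')"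
    for A A' :: "'g \<Rightarrow>\<^sub>L 'g" and v
  proof (rule norm_blinfun_bound)
    fix x
    define D where "D = A - A'"
    have "(frame_field A v - frame_field A' v) x
        = - (1 / 2) *\<^sub>R (P (br (D v) (A (P x))) + P (br (A' v) (D (P x))))"
      using linear_prp bracket_bilinear
      by (simp add: D_def blinfun.diff_left frame_field_apply linear_add linear_diff
          bilinear_lsub bilinear_rsub algebra_simps)
    also have "norm \<dots> \<le> 1 / 2 * (K * (norm D * norm v) * (norm A * norm x)
        + K * (norm A' * norm v) * (norm D * norm x))"
      using norm_triangle_le[OF add_mono[OF K(2)[of D v A x] K(2)[of A' v D x]]] by simp
    also have "\<dots> = K / 2 * norm v * (norm A + norm A') * norm D * norm x"
      by (simp add: algebra_simps)
    finally show "norm ((frame_field A v - frame_field A' v) x)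
        \<le> K / 2 * norm v * (norm A + norm A') * norm (A - A') * norm x"
      by (simp add: D_def)
  qed (use K(1) in simp)
  then show ?thesis
    using K(1) that[of "K / 2"] by simp
qed

text \<open>This is where the \<open>ad\<close>-invariance of \<open>B\<close> enters: the field is tangent to \<open>O(p)\<close>.\<close>

lemma frame_field_skew:
  fixes A :: "'g \<Rightarrow>\<^sub>L 'g"
  assumes A: "\<And>z. z \<in> p \<Longrightarrow> A z \<in> p" and "x \<in> p" "y \<in> p"
  shows "B (frame_field A v x) (A y) + B (A x) (frame_field A v y) = 0"
proof -
  have "B (frame_field A v x) (A y) = - (1 / 2) * B (br (A v) (A x)) (A y)"
    using A assms(2,3) B_bilinear by (simp add: frame_field_apply prp_id B_prp bilinear_lmul bilinear_lneg)
  moreover have "B (A x) (frame_field A v y) = - (1 / 2) * B (A x) (br (A v) (A y))"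
    using A assms(2,3) B_bilinear
    by (simp add: frame_field_apply prp_id B_sym[of "A x"] B_prp bilinear_lmul bilinear_lneg)
  ultimately show ?thesis
    using B_ad_skew[of "A v" "A x" "A y"] by (simp add: algebra_simps)
qed

end

section \<open>The truncated equation\<close>

locale riemannian_control = riemannian_reductive B br h
  for B :: "'g::euclidean_space \<Rightarrow> 'g \<Rightarrow> real" and br h +
  fixes u :: "real \<Rightarrow> 'g"
  assumes u_bounded: "bounded (range u)"
    and u_measurable: "u \<in> borel_measurable lebesgue"
begin

text \<open>Beyond \<open>Op_bound\<close>, the norm bound of \<open>O(p)\<close>, the field is cut off radially, which makes it
  globally Lipschitz without changing it near \<open>O(p)\<close>. The shift \<open>c\<close> lets solutions start at time 0.\<close>

abbreviation "radius \<equiv> Op_bound + 1"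

definition truncated_field :: "real \<Rightarrow> real \<Rightarrow> ('g \<Rightarrow>\<^sub>L 'g) \<Rightarrow> ('g \<Rightarrow>\<^sub>L 'g)" where
  "truncated_field c r M = frame_field (radial_retraction radius M) (u (r + c))"

lemma truncated_field_eq: "norm M \<le> radius \<Longrightarrow> truncated_field c r M = frame_field M (u (r + c))"
  by (simp add: truncated_field_def radial_retraction_id)

lemma truncated_field_Op:
  "S \<in> Op B h \<Longrightarrow> truncated_field c r (Blinfun S) x = Xfield B h br u (r + c) S x"
  using norm_Blinfun_Op_le[of S] by (simp add: truncated_field_eq Xfield_eq_frame_field)

lemma truncated_field_zero_on_h: "x \<in> h \<Longrightarrow> truncated_field c r M x = 0"
  by (simp add: truncated_field_def frame_field_zero_on_h)

lemma truncated_field_mem_p: "truncated_field c r M x \<in> p"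
  by (simp add: truncated_field_def frame_field_mem_p)

lemma radius_nonneg: "0 \<le> radius"
  using Op_bound_nonneg by simp

lemma truncated_field_bounded:
  obtains K where "\<And>r M. norm (truncated_field c r M) \<le> K"
proof -
  obtain C where C: "0 \<le> C"
    "\<And>A A' v. norm (frame_field A v - frame_field A' v) \<le> C * norm v * (norm A + norm A') * norm (A - A')"
    using frame_field_lipschitz by blast
  obtain U where U: "0 < U" "\<And>t. norm (u t) \<le> U"
    using u_bounded by (auto simp: bounded_pos)
  have "norm (truncated_field c r M) \<le> C * U * radius * radius" for r M
  proof -
    let ?A = "radial_retraction radius M"
    have "norm (truncated_field c r M) \<le> C * norm (u (r + c)) * norm ?A * norm ?A"
      using C(2)[of ?A "u (r + c)" 0] by (simp add: truncated_field_def)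
    also have "\<dots> \<le> C * U * radius * radius"
      using C(1) U radius_nonneg norm_radial_retraction_le[OF radius_nonneg]
      by (intro mult_mono) auto
    finally show ?thesis .
  qed
  then show ?thesis
    by (rule that)
qed

lemma truncated_field_lipschitz:
  obtains L where "0 \<le> L" "\<And>r M N. norm (truncated_field c r M - truncated_field c r N) \<le> L * norm (M - N)"
proof -
  obtain C where C: "0 \<le> C"
    "\<And>A A' v. norm (frame_field A v - frame_field A' v) \<le> C * norm v * (norm A + norm A') * norm (A - A')"
    using frame_field_lipschitz by blast
  obtain U where U: "0 < U" "\<And>t. norm (u t) \<le> U"
    using u_bounded by (auto simp: bounded_pos)
  let ?ret = "radial_retraction radius :: ('g \<Rightarrow>\<^sub>L 'g) \<Rightarrow> _"
  have "norm (truncated_field c r M - truncated_field c r N) \<le> C * U * (radius + radius) * 2 * norm (M - N)"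
    for r M N
  proof -
    have "norm (truncated_field c r M - truncated_field c r N)
        \<le> C * norm (u (r + c)) * (norm (?ret M) + norm (?ret N)) * norm (?ret M - ?ret N)"
      using C(2) by (simp add: truncated_field_def)
    also have "\<dots> \<le> C * U * (radius + radius) * (2 * norm (M - N))"
      using C(1) U radius_nonneg norm_radial_retraction_le[OF radius_nonneg]
        lipschitz_onD[OF radial_retraction_lipschitz[OF radius_nonneg], of M N]
      by (intro mult_mono add_mono) (auto simp: dist_norm)
    finally show ?thesis
      by (simp only: mult.assoc)
  qed
  moreover have "0 \<le> C * U * (radius + radius) * 2"
    using C(1) U(1) radius_nonneg by simp
  ultimately show ?thesis
    using that by blast
qed

lemma truncated_field_integrable:
  assumes M: "continuous_on UNIV M"
  shows "(\<lambda>r. truncated_field c r (M r) x) integrable_on {a..b}"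
proof -
  obtain K where K: "\<And>r M. norm (truncated_field c r M) \<le> K"
    using truncated_field_bounded by blast
  let ?ret = "radial_retraction radius :: ('g \<Rightarrow>\<^sub>L 'g) \<Rightarrow> _"
  define f where "f A v = - (1 / 2) *\<^sub>R P (br (blinfun_apply A v) (blinfun_apply A (P x)))"
    for A :: "'g \<Rightarrow>\<^sub>L 'g" and v
  have "bounded_linear P"
    using linear_prp by (simp add: linear_conv_bounded_linear)
  moreover have "bounded_bilinear br"
    using bracket_bilinear by (simp add: bilinear_conv_bounded_bilinear)
  ultimately have "continuous_on UNIV (\<lambda>z. f (fst z) (snd z))"
    unfolding f_def
    by (intro continuous_intros bounded_linear.continuous_on[of P] bounded_bilinear.continuous_on[of br])
  moreover have "continuous_on UNIV (\<lambda>r. ?ret (M r))"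
    using lipschitz_on_continuous_on[OF radial_retraction_lipschitz[OF radius_nonneg]]
    by (rule continuous_on_compose2[OF _ M]) simp
  then have "(\<lambda>r. ?ret (M r)) measurable_on UNIV"
    by (rule continuous_imp_measurable_on)
  moreover have "f 0 0 = 0"
    using linear_prp bracket_bilinear by (simp add: f_def linear_0 bilinear_lzero)
  ultimately have "(\<lambda>r. f (?ret (M r)) (u (r + c))) measurable_on UNIV"
    using measurable_on_combine[OF _ measurable_on_translate[OF u_measurable]] by blast
  then have "(\<lambda>r. truncated_field c r (M r) x) measurable_on UNIV"
    by (simp add: f_def truncated_field_def frame_field_apply)
  moreover have "norm (truncated_field c r (M r) x) \<le> K * norm x" for r
    using K by (meson mult_right_mono norm_blinfun norm_ge_zero order_trans)
  ultimately show ?thesis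
    by (rule integrable_on_if_measurable_on_bounded)
qed

lemma truncated_field_lipschitz_field:
  obtains K L where "lipschitz_field (truncated_field c) K L"
proof -
  obtain K where "\<And>r M. norm (truncated_field c r M) \<le> K"
    using truncated_field_bounded by blast
  moreover obtain L where "0 \<le> L"
    "\<And>r M N. norm (truncated_field c r M - truncated_field c r N) \<le> L * norm (M - N)"
    using truncated_field_lipschitz by blast
  ultimately show ?thesis
    using truncated_field_integrable by (intro that[of K L] lipschitz_field.intro)
qed

lemma truncated_field_almost_skew:
  fixes M N :: "'g \<Rightarrow>\<^sub>L 'g"
  assumes KB: "0 \<le> KB" "\<And>a b. \<bar>B a b\<bar> \<le> KB * norm a * norm b"
    and F: "lipschitz_field (truncated_field c) K L"
    and N: "norm N \<le> radius" "\<And>z. z \<in> p \<Longrightarrow> N z \<in> p" and xy: "x \<in> p" "y \<in> p"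
  shows "\<bar>B (truncated_field c r M x) (N y) + B (N x) (truncated_field c r M y)\<bar>
      \<le> 2 * KB * radius * L * norm (M - N) * norm x * norm y"
proof -
  define D where "D = truncated_field c r M - truncated_field c r N"
  have D: "norm (D z) \<le> L * norm (M - N) * norm z" for z
    unfolding D_def using lipschitz_field.norm_field_apply_diff_le[OF F] by (simp add: blinfun.diff_left)
  have N_le: "norm (N z) \<le> radius * norm z" for z
    using N(1) by (meson mult_right_mono norm_blinfun norm_ge_zero order_trans)
  have L: "0 \<le> L"
    using lipschitz_field.lipschitz_const_nonneg[OF F] .
  have "B (truncated_field c r M x) (N y) + B (N x) (truncated_field c r M y)
      = B (D x) (N y) + B (N x) (D y)"
    using frame_field_skew[OF N(2) xy, of "u (r + c)"] B_bilinear
    by (simp add: D_def truncated_field_eq[OF N(1)] blinfun.diff_left bilinear_lsub bilinear_rsub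
        algebra_simps)
  also have "\<bar>\<dots>\<bar> \<le> \<bar>B (D x) (N y)\<bar> + \<bar>B (N x) (D y)\<bar>"
    by (rule abs_triangle_ineq)
  also have "\<dots> \<le> KB * (L * norm (M - N) * norm x) * (radius * norm y)
      + KB * (radius * norm x) * (L * norm (M - N) * norm y)"
  proof (rule add_mono)
    have "\<bar>B (D x) (N y)\<bar> \<le> KB * norm (D x) * norm (N y)"
      by (rule KB(2))
    also have "\<dots> \<le> KB * (L * norm (M - N) * norm x) * (radius * norm y)"
      using KB(1) L by (intro mult_mono[OF mult_left_mono[OF D] N_le]) auto
    finally show "\<bar>B (D x) (N y)\<bar> \<le> KB * (L * norm (M - N) * norm x) * (radius * norm y)" .
    have "\<bar>B (N x) (D y)\<bar> \<le> KB * norm (N x) * norm (D y)"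
      by (rule KB(2))
    also have "\<dots> \<le> KB * (radius * norm x) * (L * norm (M - N) * norm y)"
      using KB(1) L Op_bound_nonneg by (intro mult_mono[OF mult_left_mono[OF N_le] D]) auto
    finally show "\<bar>B (N x) (D y)\<bar> \<le> KB * (radius * norm x) * (L * norm (M - N) * norm y)" .
  qed
  also have "\<dots> = 2 * KB * radius * L * norm (M - N) * norm x * norm y"
    by (simp add: algebra_simps)
  finally show ?thesis .
qed

lemma truncated_solution_first_order_le:
  assumes KB: "0 \<le> KB" "\<And>a b. \<bar>B a b\<bar> \<le> KB * norm a * norm b"
    and F: "lipschitz_field (truncated_field c) K L"
    and S: "integral_solution UNIV (truncated_field c) S" and lip: "\<Lambda>-lipschitz_on UNIV S"
    and small: "norm (S s) \<le> radius" and into_p: "\<And>z. z \<in> p \<Longrightarrow> S s z \<in> p"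
    and xy: "x \<in> p" "y \<in> p"
  shows "\<bar>B (S t x - S s x) (S s y) + B (S s x) (S t y - S s y)\<bar>
      \<le> KB * radius * L * \<Lambda> * norm x * norm y * (t - s)\<^sup>2"
proof -
  define C where "C = 2 * KB * radius * L * \<Lambda> * norm x * norm y"
  define g where "g = (\<lambda>r. B (truncated_field c r (S r) x) (S s y) + B (S s x) (truncated_field c r (S r) y))"
  have g: "norm (g r) \<le> C * \<bar>r - s\<bar> ^ 1" for r
  proof -
    have "\<bar>g r\<bar> \<le> 2 * KB * radius * L * norm (S r - S s) * norm x * norm y"
      unfolding g_def by (rule truncated_field_almost_skew[OF KB F small into_p xy])
    also have "\<dots> \<le> 2 * KB * radius * L * (\<Lambda> * \<bar>r - s\<bar>) * norm x * norm y"
      using KB(1) Op_bound_nonneg lipschitz_field.lipschitz_const_nonneg[OF F] lipschitz_onD[OF lip]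
      by (intro mult_right_mono mult_left_mono) (auto simp: dist_norm dist_real_def)
    finally show ?thesis
      by (simp add: C_def mult_ac)
  qed
  have int: "(\<lambda>r. truncated_field c r (S r) z) integrable_on {min s t..max s t}" for z
    by (rule integral_solution_integrable[OF S]) simp_all
  have increment: "S t z - S s z = signed_integral s t (\<lambda>r. truncated_field c r (S r) z)" for z
    by (rule integral_solution_signed_integral[OF S]) simp_all
  have int_B: "(\<lambda>r. B (truncated_field c r (S r) z) w) integrable_on {min s t..max s t}"
    "(\<lambda>r. B w (truncated_field c r (S r) z)) integrable_on {min s t..max s t}" for z w
    using integrable_linear[OF int bounded_linear_B_left] integrable_linear[OF int bounded_linear_B_right]
    by (simp_all add: o_def)
  have "B (S t x - S s x) (S s y) + B (S s x) (S t y - S s y) = signed_integral s t g"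
    using signed_integral_linear[OF int bounded_linear_B_left] signed_integral_linear[OF int bounded_linear_B_right]
    by (simp add: increment g_def signed_integral_add int_B)
  moreover have "norm (signed_integral s t g) \<le> C * \<bar>t - s\<bar> ^ Suc 1 / Suc 1"
    by (intro norm_signed_integral_le_power g) (simp add: g_def integrable_add int_B)
  ultimately show ?thesis
    by (simp add: C_def power2_abs power2_eq_square)
qed

lemma truncated_solution_quadratic:
  assumes S: "integral_solution UNIV (truncated_field c) S" and lip: "\<Lambda>-lipschitz_on UNIV S"
    and small: "norm (S s) \<le> radius" and into_p: "\<And>z. z \<in> p \<Longrightarrow> S s z \<in> p"
    and xy: "x \<in> p" "y \<in> p"
  obtains C where "\<And>t. \<bar>B (S t x) (S t y) - B (S s x) (S s y)\<bar> \<le> C * (t - s)\<^sup>2"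
proof -
  obtain K L where F: "lipschitz_field (truncated_field c) K L"
    by (rule truncated_field_lipschitz_field)
  obtain KB where KB: "0 < KB" "\<And>a b. \<bar>B a b\<bar> \<le> KB * norm a * norm b"
    using abs_B_le by blast
  have \<Lambda>: "0 \<le> \<Lambda>"
    using lip by (rule lipschitz_on_nonneg)
  have increment_le: "norm (S t z - S s z) \<le> \<Lambda> * \<bar>t - s\<bar> * norm z" for t z
    using lipschitz_onD[OF lip, of t s]
    by (metis blinfun.diff_left dist_norm dist_real_def mult_right_mono norm_blinfun norm_ge_zero
        order_trans UNIV_I)
  define C where "C = KB * radius * L * \<Lambda> * norm x * norm y + KB * \<Lambda>\<^sup>2 * norm x * norm y"
  have "\<bar>B (S t x) (S t y) - B (S s x) (S s y)\<bar> \<le> C * (t - s)\<^sup>2" for t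
  proof -
    have "\<bar>B (S t x - S s x) (S t y - S s y)\<bar> \<le> KB * norm (S t x - S s x) * norm (S t y - S s y)"
      by (rule KB(2))
    also have "\<dots> \<le> KB * (\<Lambda> * \<bar>t - s\<bar> * norm x) * (\<Lambda> * \<bar>t - s\<bar> * norm y)"
      using KB(1) \<Lambda> by (intro mult_mono[OF mult_left_mono[OF increment_le] increment_le]) auto
    also have "\<dots> = KB * \<Lambda>\<^sup>2 * norm x * norm y * (t - s)\<^sup>2"
      by (simp add: power2_eq_square abs_mult_self_eq algebra_simps)
    finally have second_order: "\<bar>B (S t x - S s x) (S t y - S s y)\<bar> \<le> KB * \<Lambda>\<^sup>2 * norm x * norm y * (t - s)\<^sup>2" .
    have first_order: "\<bar>B (S t x - S s x) (S s y) + B (S s x) (S t y - S s y)\<bar>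
        \<le> KB * radius * L * \<Lambda> * norm x * norm y * (t - s)\<^sup>2"
      using KB(1) by (intro truncated_solution_first_order_le[OF _ KB(2) F S lip small into_p xy]) simp
    have "B (S t x) (S t y) - B (S s x) (S s y)
        = (B (S t x - S s x) (S s y) + B (S s x) (S t y - S s y)) + B (S t x - S s x) (S t y - S s y)"
      using B_bilinear by (simp add: bilinear_lsub bilinear_rsub algebra_simps)
    also have "\<bar>\<dots>\<bar> \<le> KB * radius * L * \<Lambda> * norm x * norm y * (t - s)\<^sup>2
        + KB * \<Lambda>\<^sup>2 * norm x * norm y * (t - s)\<^sup>2"
      using abs_triangle_ineq add_mono[OF first_order second_order] by (rule order_trans)
    finally show ?thesis
      by (simp add: C_def distrib_right)
  qed
  then show ?thesis
    by (rule that)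
qed

lemma truncated_solution_invariant_subspaces:
  assumes S: "integral_solution UNIV (truncated_field c) S" and S0: "blinfun_apply (S s0) \<in> Op B h"
  shows truncated_solution_zero_on_h: "x \<in> h \<Longrightarrow> S t x = 0"
    and truncated_solution_mem_p: "S t x \<in> p"
proof -
  have int: "(\<lambda>r. truncated_field c r (S r) x) integrable_on {min s0 t..max s0 t}"
    by (rule integral_solution_integrable[OF S]) simp_all
  have increment: "S t x = S s0 x + signed_integral s0 t (\<lambda>r. truncated_field c r (S r) x)"
    using integral_solution_signed_integral[OF S, of s0 t x] by (simp add: algebra_simps)
  show "S t x = 0" if "x \<in> h"
  proof -
    have "(\<lambda>r. truncated_field c r (S r) x) = (\<lambda>r. 0)"
      using that by (simp add: truncated_field_zero_on_h)
    then show ?thesis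
      using increment S0 that by (simp add: Op_def signed_integral_def)
  qed
  have "B (S t x) y = 0" if "y \<in> h" for y
  proof -
    have "S s0 x \<in> p"
      using S0 prp_mem Op_prp[OF S0] by (metis (no_types, lifting) Op_def mem_Collect_eq)
    then have "B (S s0 x) y = 0"
      using that by (simp add: pcomp_def)
    moreover have "B (signed_integral s0 t (\<lambda>r. truncated_field c r (S r) x)) y
        = signed_integral s0 t (\<lambda>r. B (truncated_field c r (S r) x) y)"
      by (rule signed_integral_linear[OF int bounded_linear_B_left, symmetric])
    moreover have "(\<lambda>r. B (truncated_field c r (S r) x) y) = (\<lambda>r. 0)"
      using truncated_field_mem_p that by (auto simp: pcomp_def)
    ultimately show ?thesis
      using B_bilinear increment by (simp add: bilinear_ladd signed_integral_def)
  qed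
  then show "S t x \<in> p"
    by (simp add: pcomp_def)
qed

lemma truncated_solution_B_constant:
  assumes S: "integral_solution UNIV (truncated_field c) S" and lip: "\<Lambda>-lipschitz_on UNIV S"
    and small: "\<And>r. r \<in> {a..b} \<Longrightarrow> norm (S r) \<le> radius"
    and into_p: "\<And>r z. z \<in> p \<Longrightarrow> S r z \<in> p" and xy: "x \<in> p" "y \<in> p"
    and "q \<in> {a..b}" "t \<in> {a..b}"
  shows "B (S q x) (S q y) = B (S t x) (S t y)"
proof -
  have "((\<lambda>r. B (S r x) (S r y)) has_real_derivative 0) (at r within {a..b})" if r: "r \<in> {a..b}" for r
  proof -
    obtain C where "\<And>t'. \<bar>B (S t' x) (S t' y) - B (S r x) (S r y)\<bar> \<le> C * (t' - r)\<^sup>2"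
      using truncated_solution_quadratic[OF S lip small[OF r] into_p xy] by blast
    then have "((\<lambda>r. B (S r x) (S r y)) has_real_derivative 0) (at r)"
      by (rule has_real_derivative_zero_if_quadratic_bound)
    then show ?thesis
      by (rule has_field_derivative_at_within)
  qed
  then have "\<exists>k. \<forall>r\<in>{a..b}. B (S r x) (S r y) = k"
    by (intro has_field_derivative_zero_constant) (simp_all add: convex_real_interval)
  then show ?thesis
    using \<open>q \<in> {a..b}\<close> \<open>t \<in> {a..b}\<close> by (metis (no_types, lifting))
qed

lemma truncated_solution_Op_near:
  assumes S: "integral_solution UNIV (truncated_field c) S" and lip: "\<Lambda>-lipschitz_on UNIV S"
    and St: "blinfun_apply (S t) \<in> Op B h" and "\<bar>q - t\<bar> < 1 / (\<Lambda> + 1)"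
  shows "blinfun_apply (S q) \<in> Op B h"
proof -
  define \<delta> where "\<delta> = 1 / (\<Lambda> + 1)"
  have \<Lambda>: "0 \<le> \<Lambda>"
    using lip by (rule lipschitz_on_nonneg)
  then have \<delta>: "0 < \<delta>" "\<Lambda> * \<delta> \<le> 1"
    by (simp_all add: \<delta>_def field_simps)
  have "norm (S t) \<le> Op_bound"
    using norm_Blinfun_Op_le[OF St] by (simp add: blinfun_apply_inverse)
  then have small: "norm (S r) \<le> radius" if "r \<in> {t - \<delta>..t + \<delta>}" for r
  proof -
    have "norm (S r - S t) \<le> \<Lambda> * \<bar>r - t\<bar>"
      using lipschitz_onD[OF lip] by (simp add: dist_norm dist_real_def)
    also have "\<dots> \<le> \<Lambda> * \<delta>"
      using that \<Lambda> by (intro mult_left_mono) auto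
    finally show ?thesis
      using \<open>norm (S t) \<le> Op_bound\<close> \<delta>(2) norm_triangle_sub[of "S r" "S t"] by linarith
  qed
  have "q \<in> {t - \<delta>..t + \<delta>}" "t \<in> {t - \<delta>..t + \<delta>}"
    using \<open>\<bar>q - t\<bar> < 1 / (\<Lambda> + 1)\<close> \<delta>(1) by (auto simp: \<delta>_def)
  then have "B (S q x) (S q y) = B (S t x) (S t y)" if "x \<in> p" "y \<in> p" for x y
    using truncated_solution_B_constant[OF S lip small truncated_solution_mem_p[OF S St] that] by blast
  then show ?thesis
    using St truncated_solution_zero_on_h[OF S St] truncated_solution_mem_p[OF S St]
      bounded_linear.linear[OF blinfun.bounded_linear_right]
    by (auto simp: Op_def)
qed

lemma truncated_solution_Op:
  assumes S: "integral_solution UNIV (truncated_field c) S" and lip: "\<Lambda>-lipschitz_on UNIV S"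
    and S0: "blinfun_apply (S s0) \<in> Op B h"
  shows "blinfun_apply (S t) \<in> Op B h"
proof (rule is_interval_step_induct[of UNIV s0 t _ "1 / (\<Lambda> + 1)"])
  show "0 < 1 / (\<Lambda> + 1)"
    using lipschitz_on_nonneg[OF lip] by simp
qed (use S0 truncated_solution_Op_near[OF S lip] in auto)

section \<open>Completeness\<close>

lemma truncated_solution_exists:
  assumes "S0 \<in> Op B h"
  obtains S where "S s0 = Blinfun S0" "\<And>t. blinfun_apply (S t) \<in> Op B h"
    "integral_solution UNIV (truncated_field c) S"
proof -
  obtain K L where "lipschitz_field (truncated_field c) K L"
    by (rule truncated_field_lipschitz_field)
  then obtain S where S: "S s0 = Blinfun S0" "K-lipschitz_on UNIV S" "integral_solution UNIV (truncated_field c) S"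
    using lipschitz_field.picard_existence by blast
  moreover have "blinfun_apply (S s0) \<in> Op B h"
    using assms by (simp add: S(1) blinfun_apply_Blinfun_Op)
  ultimately show ?thesis
    using truncated_solution_Op that by blast
qed

lemma integral_curve_if_truncated_solution:
  assumes Op: "\<And>t. blinfun_apply (S t) \<in> Op B h" and S: "integral_solution J (truncated_field c) S"
  shows "integral_curve B h br u J (\<lambda>s. s + c) (\<lambda>s. blinfun_apply (S s))"
proof -
  have "truncated_field c r (S r) x = Xfield B h br u (r + c) (S r) x" for r x
    using truncated_field_Op[OF Op[of r]] by (simp add: blinfun_apply_inverse)
  then show ?thesis
    using Op S by (auto simp: integral_curve_def integral_solution_def intro!: derivative_eq_intros)
qed

lemma truncated_solution_if_integral_curve:
  assumes curve: "integral_curve B h br u J tau S" and J: "is_interval J"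
    and tau: "\<And>s. s \<in> J \<Longrightarrow> tau s = s + c"
  shows "integral_solution J (truncated_field c) (\<lambda>s. Blinfun (S s))"
  unfolding integral_solution_def
proof (intro ballI impI allI)
  fix a b x assume ab: "a \<in> J" "b \<in> J" "a \<le> b"
  have Op: "S s \<in> Op B h" if "s \<in> J" for s
    using curve that by (simp add: integral_curve_def)
  have eq: "truncated_field c r (Blinfun (S r)) x = Xfield B h br u (tau r) (S r) x" if "r \<in> {a..b}" for r
  proof -
    have "r \<in> J"
      using mem_is_interval_1_I[OF J ab(1,2)] that by simp
    then show ?thesis
      using truncated_field_Op[OF Op] tau by simp
  qed
  have "((\<lambda>r. Xfield B h br u (tau r) (S r) x) has_integral (S b x - S a x)) {a..b}"
    using curve ab by (simp add: integral_curve_def)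
  then have "((\<lambda>r. truncated_field c r (Blinfun (S r)) x) has_integral (S b x - S a x)) {a..b}"
    by (simp only: has_integral_cong[OF eq])
  then show "((\<lambda>r. truncated_field c r (Blinfun (S r)) x) has_integral
      (Blinfun (S b) x - Blinfun (S a) x)) {a..b}"
    using ab by (simp add: blinfun_apply_Blinfun_Op Op)
qed

lemma integral_curve_exists:
  assumes "S0 \<in> Op B h"
  shows "\<exists>tau S. integral_curve B h br u UNIV tau S \<and> tau 0 = t0 \<and> S 0 = S0"
proof -
  obtain S where "S 0 = Blinfun S0" "\<And>t. blinfun_apply (S t) \<in> Op B h"
    "integral_solution UNIV (truncated_field t0) S"
    using truncated_solution_exists[OF assms] by blast
  then have "integral_curve B h br u UNIV (\<lambda>s. s + t0) (\<lambda>s. blinfun_apply (S s))"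
    and "blinfun_apply (S 0) = S0"
    using assms integral_curve_if_truncated_solution by (simp_all add: blinfun_apply_Blinfun_Op)
  then show ?thesis
    by (intro exI[of _ "\<lambda>s. s + t0"] exI[of _ "\<lambda>s. blinfun_apply (S s)"]) simp
qed

lemma integral_curve_extends:
  assumes J: "is_interval J" "J \<noteq> {}" and curve: "integral_curve B h br u J tau S"
  shows "\<exists>tau' S'. integral_curve B h br u UNIV tau' S' \<and> (\<forall>s\<in>J. tau' s = tau s \<and> S' s = S s)"
proof -
  obtain s0 where "s0 \<in> J"
    using J(2) by blast
  have Op: "S s \<in> Op B h" if "s \<in> J" for s
    using curve that by (simp add: integral_curve_def)
  have "(tau has_real_derivative 1) (at s)" if "s \<in> J" for s
    using curve that by (simp add: integral_curve_def)
  then obtain c where tau: "\<And>s. s \<in> J \<Longrightarrow> tau s = s + c"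
    using real_derivative_one_imp_shift[OF J(1)] by blast
  obtain S' where S': "S' s0 = Blinfun (S s0)" "\<And>t. blinfun_apply (S' t) \<in> Op B h"
    "integral_solution UNIV (truncated_field c) S'"
    using truncated_solution_exists[OF Op[OF \<open>s0 \<in> J\<close>]] by blast
  obtain K L where F: "lipschitz_field (truncated_field c) K L"
    by (rule truncated_field_lipschitz_field)
  have "Blinfun (S t) = S' t" if "t \<in> J" for t
  proof (rule integral_solution_unique[OF lipschitz_field.field_lipschitz[OF F]
        lipschitz_field.lipschitz_const_nonneg[OF F] J(1) \<open>s0 \<in> J\<close>])
    show "norm (Blinfun (S t) - S' t) \<le> 2 * Op_bound" if "t \<in> J" for t
      using norm_triangle_ineq4[of "Blinfun (S t)" "S' t"] norm_Blinfun_Op_le[OF Op[OF that]]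
        norm_Blinfun_Op_le[OF S'(2)[of t]] by (simp add: blinfun_apply_inverse)
    show "integral_solution J (truncated_field c) (\<lambda>s. Blinfun (S s))"
      by (rule truncated_solution_if_integral_curve[OF curve J(1) tau])
    show "integral_solution J (truncated_field c) S'"
      using S'(3) by (auto simp: integral_solution_def)
  qed (use S'(1) that in auto)
  then have "blinfun_apply (S' s) = S s" if "s \<in> J" for s
    using that Op by (metis blinfun_apply_Blinfun_Op)
  moreover have "integral_curve B h br u UNIV (\<lambda>s. s + c) (\<lambda>s. blinfun_apply (S' s))"
    by (rule integral_curve_if_truncated_solution[OF S'(2,3)])
  ultimately show ?thesis
    using tau by (intro exI[of _ "\<lambda>s. s + c"] exI[of _ "\<lambda>s. blinfun_apply (S' s)"]) simp
qed

end

theorem lemma4p8: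
  fixes B :: "'g::euclidean_space \<Rightarrow> 'g \<Rightarrow> real"
    and br :: "'g \<Rightarrow> 'g \<Rightarrow> 'g"
    and h :: "'g set"
    and u :: "real \<Rightarrow> 'g"
  assumes "lie_algebra br"
    and "invariant_form B br"
    and "lie_subalgebra h br"
    and "\<forall>x\<in>pcomp B h. x \<noteq> 0 \<longrightarrow> B x x > 0"
    and "\<forall>t. u t \<in> pcomp B h"
    and "bounded (range u)"
    and "u \<in> borel_measurable lebesgue"
  shows "complete_X B h br u"
proof -
  have "bilinear br"
    using assms(1) by (simp add: lie_algebra_def)
  moreover have "subspace h"
    using assms(3) by (simp add: lie_subalgebra_def)
  ultimately interpret riemannian_control B br h u
    using assms(2,4,6,7) by unfold_locales
  show ?thesis
    unfolding complete_X_def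
  proof (intro conjI allI impI)
    show "\<exists>tau S. integral_curve B h br u UNIV tau S \<and> tau 0 = t0 \<and> S 0 = S0"
      if "S0 \<in> Op B h" for t0 S0
      using that by (rule integral_curve_exists)
    show "\<exists>tau' S'. integral_curve B h br u UNIV tau' S' \<and> (\<forall>s\<in>J. tau' s = tau s \<and> S' s = S s)"
      if "is_interval J \<and> open J \<and> J \<noteq> {} \<and> integral_curve B h br u J tau S" for J tau S
      using that integral_curve_extends by blast
  qed
qed

end
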